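(* Let $n\ge1$, $p\ge2$, and let $\mathbf X\in\mathbb R^{n\times p}$ have i.i.d.\ rows $\mathcal N_p(0,\Sigma^* )$ with $\Sigma^*$ positive definite. Let $\Omega^*=(\Sigma^* )^{-1}=(\omega^*_{ij})$, $\phi^*_j=1/\omega^*_{jj}$, $B^*_{ij}=\omega^*_{ij}/\omega^*_{jj}$, and assume $\omega^*_{j1}\neq0$ for all $j\in[p]$ (equivalently $B^*_{j1}\ne0$ and $B^*_{1j}\neq 0$ for all $j$). Let $S_n=\frac1n\mathbf X^\top\mathbf X$ and, for $\phi\in(0,\infty)^p$, $$\ell(\phi)=-\sum_{j=1}^p\Big\{\log\phi_j+\frac{(S_nB^* )_{jj}}{\phi_j}\Big\}.$$ Let $\mathcal F=\{\phi\in(0,\infty)^p:\ B^*D_\phi^{-1}\text{ is symmetric positive definite}\}$. Then $\mathcal F=\{\phi:\ \phi_1>0,\ \phi_j=(B^*_{1j}/B^*_{j1})\phi_1\ \forall j\}$, and almost surely $\ell$ has a unique maximizer on $\mathcal F$, namely $$\hat\phi^{\rm SML}_j=\frac1p\,\frac{B^*_{1j}}{B^*_{j1}}\,\mathrm{trace}\big(S_nB^*D_{B^*_{\bullet,1}}D_{B^*_{1,\bullet}}^{-1}\big),\qquad j\in[p].$$ Moreover, for every $j\in[p]$, $$\mathbf E\big[(\hat\phi^{\rm SML}_j-\phi^*_j)^2\big]=\frac{2(\phi^*_j)^2}{np},$$ and for every $t>0$, $$\mathbf P\bigg(\max_{j\in[p]}\frac{|\hat\phi^{\rm SML}_j-\phi^*_j|}{\phi^*_j}>2\Big(\frac{t+\log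 p}{np}\Big)^{1/2}+\frac{2(t+\log p)}{np}\bigg)\le 2e^{-t}.$$
   Context: For a vector $v\in\mathbb R^p$, $D_v$ is the $p\times p$ diagonal matrix with diagonal entries $v_1,\dots,v_p$. $B^*_{\bullet,1}$ is the first column and $B^*_{1,\bullet}$ the first row of $B^*$. Up to additive constants and the factor $n/2$, $\ell(\phi)+\log|B^*|$ is the Gaussian log-likelihood of the data under precision matrix $B^*D_\phi^{-1}$ (profiled in the mean). *)

theory Defs
  imports "HOL-Probability.Probability"
begin

definition diag_mat :: "real^'n \<Rightarrow> real^'n^'n" where
  "diag_mat v = (\<chi> i j. if i = j then v $ i else 0)"

definition sym_posdef :: "real^'n^'n \<Rightarrow> bool" where
  "sym_posdef A \<longleftrightarrow> transpose A = A \<and> (\<forall>x. x \<noteq> 0 \<longrightarrow> 0 < x \<bullet> (A *v x))"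

definition mvn_density :: "real^'n^'n \<Rightarrow> real^'n \<Rightarrow> real" where
  "mvn_density Sig x =
     exp (- (x \<bullet> (matrix_inv Sig *v x)) / 2) / sqrt ((2 * pi) ^ CARD('n) * det Sig)"

text \<open>S_n = (1/n) X^T X, where row i of X is x i (i < n).\<close>
definition sample_cov :: "nat \<Rightarrow> (nat \<Rightarrow> real^'n) \<Rightarrow> real^'n^'n" where
  "sample_cov n x = (\<chi> a b. (\<Sum>i<n. x i $ a * x i $ b) / real n)"

definition Bmat :: "real^'n^'n \<Rightarrow> real^'n^'n" where
  "Bmat Om = (\<chi> i j. Om $ i $ j / Om $ j $ j)"

definition phistar :: "real^'n^'n \<Rightarrow> real^'n" where
  "phistar Om = (\<chi> j. 1 / Om $ j $ j)"

definition loglik :: "real^'n^'n \<Rightarrow> real^'n^'n \<Rightarrow> real^'n \<Rightarrow> real" where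
  "loglik S B phi = - (\<Sum>j\<in>UNIV. ln (phi $ j) + (S ** B) $ j $ j / phi $ j)"

definition feasible :: "real^'n^'n \<Rightarrow> (real^'n) set" where
  "feasible B = {phi. (\<forall>j. 0 < phi $ j) \<and> sym_posdef (B ** matrix_inv (diag_mat phi))}"

text \<open>The SML estimator; k plays the role of the first index 1.\<close>
definition phi_sml :: "'n \<Rightarrow> real^'n^'n \<Rightarrow> real^'n^'n \<Rightarrow> real^'n" where
  "phi_sml k S B = (\<chi> j. (1 / real CARD('n)) * (B $ k $ j / B $ j $ k) *
      trace (S ** B ** diag_mat (column k B) ** matrix_inv (diag_mat (row k B))))"

end

theory Submission
  imports Defs "HOL-Real_Asymp.Real_Asymp"
begin

text \<open>On the feasible set, the ray \<open>{c \<phi>\<^sup>* | c > 0}\<close>, the log-likelihood depends on the data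
  only through \<open>tr(S\<^sub>n \<Omega>\<^sup>*)\<close>, so its maximiser is \<open>(tr(S\<^sub>n \<Omega>\<^sup>*) / p) \<phi>\<^sup>* = (Q / np) \<phi>\<^sup>*\<close> with
  \<open>Q = \<Sum>\<^sub>i X\<^sub>i\<^sup>T \<Omega>\<^sup>* X\<^sub>i\<close>. \<open>Q\<close> is \<open>\<chi>\<^sup>2\<close> with \<open>np\<close> degrees of freedom, which is used only through
  its moment generating function \<open>(1 - 2l)\<^sup>-\<^sup>n\<^sup>p\<^sup>/\<^sup>2\<close>: the first two moments give the mean squared
  error, and Chernoff bounds give the tail inequality, uniformly in \<open>j\<close> because every coordinate
  of the estimator has the same relative error \<open>Q / np - 1\<close>.\<close>

section \<open>Symmetric positive definite matrices\<close>

lemma matrix_inv_eqI: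
  fixes A A' :: "real^'n^'n"
  assumes "A ** A' = mat 1" "A' ** A = mat 1"
  shows "matrix_inv A = A'"
proof -
  have "\<exists>B. A ** B = mat 1 \<and> B ** A = mat 1" using assms by blast
  then have B: "A ** matrix_inv A = mat 1 \<and> matrix_inv A ** A = mat 1"
    unfolding matrix_inv_def by (rule someI_ex)
  have "matrix_inv A = matrix_inv A ** (A ** A')" using assms by simp
  also have "\<dots> = (matrix_inv A ** A) ** A'" by (simp add: matrix_mul_assoc)
  also have "\<dots> = A'" using B by simp
  finally show ?thesis .
qed

lemma sym_posdef_mult_matrix_inv:
  fixes A :: "real^'n^'n"
  assumes "sym_posdef A"
  shows "A ** matrix_inv A = mat 1" "matrix_inv A ** A = mat 1"
proof -
  have "inj ((*v) A)"
  proof (rule injI)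
    fix x y assume "A *v x = A *v y"
    then have "(x - y) \<bullet> (A *v (x - y)) = 0" by (simp add: matrix_vector_mult_diff_distrib)
    then show "x = y" using assms unfolding sym_posdef_def by (metis eq_iff_diff_eq_0 less_irrefl)
  qed
  then have "invertible A" using matrix_left_invertible_injective invertible_left_inverse by blast
  then have "\<exists>B. A ** B = mat 1 \<and> B ** A = mat 1" unfolding invertible_def by blast
  from someI_ex[OF this] show "A ** matrix_inv A = mat 1" "matrix_inv A ** A = mat 1"
    unfolding matrix_inv_def by auto
qed

lemma sym_posdef_matrix_inv:
  fixes A :: "real^'n^'n"
  assumes A: "sym_posdef A"
  shows "sym_posdef (matrix_inv A)"
  unfolding sym_posdef_def
proof (intro conjI allI impI)
  let ?B = "matrix_inv A"
  have "transpose ?B ** A = mat 1"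
    using arg_cong[OF sym_posdef_mult_matrix_inv(1)[OF A], of transpose] A
    by (simp add: matrix_transpose_mul sym_posdef_def)
  then have "transpose ?B = transpose ?B ** (A ** ?B)"
    using sym_posdef_mult_matrix_inv(1)[OF A] by simp
  also have "\<dots> = ?B" by (simp add: matrix_mul_assoc \<open>transpose ?B ** A = mat 1\<close>)
  finally show "transpose ?B = ?B" .
next
  fix x :: "real^'n" assume "x \<noteq> 0"
  define y where "y = matrix_inv A *v x"
  have xy: "A *v y = x"
    unfolding y_def by (simp add: matrix_vector_mul_assoc sym_posdef_mult_matrix_inv(1)[OF A])
  then have "y \<noteq> 0" using \<open>x \<noteq> 0\<close> by auto
  then have "0 < y \<bullet> (A *v y)" using A unfolding sym_posdef_def by blast
  then show "0 < x \<bullet> (matrix_inv A *v x)" using xy by (simp add: y_def inner_commute)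
qed

lemma sym_posdef_entry_sym:
  assumes "sym_posdef A"
  shows "A $ i $ j = A $ j $ i"
proof -
  have "transpose A $ j $ i = A $ j $ i" using assms unfolding sym_posdef_def by simp
  then show ?thesis by (simp add: transpose_def)
qed

lemma sym_posdef_diag_pos:
  fixes A :: "real^'n^'n"
  assumes "sym_posdef A"
  shows "0 < A $ j $ j"
proof -
  have "0 < axis j 1 \<bullet> (A *v axis j 1)"
    using assms unfolding sym_posdef_def by (simp add: axis_eq_0_iff)
  also have "axis j 1 \<bullet> (A *v axis j 1) = A $ j $ j"
    unfolding inner_axis' by (simp add: matrix_vector_mult_def axis_def if_distrib cong: if_cong)
  finally show ?thesis .
qed

lemma sym_posdef_divide:
  fixes A :: "real^'n^'n"
  assumes "sym_posdef A" "0 < c"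
  shows "sym_posdef (\<chi> i j. A $ i $ j / c)"
proof -
  have "(\<chi> i j. A $ i $ j / c) *v x = (1 / c) *\<^sub>R (A *v x)" for x
    by (simp add: vec_eq_iff matrix_vector_mult_def sum_divide_distrib)
  moreover have "transpose (\<chi> i j. A $ i $ j / c) = (\<chi> i j. A $ i $ j / c)"
    using sym_posdef_entry_sym[OF assms(1)] by (simp add: vec_eq_iff transpose_def)
  ultimately show ?thesis
    using assms unfolding sym_posdef_def by simp
qed

lemma matrix_mult_diag_mat: "(A ** diag_mat d) $ i $ j = A $ i $ j * d $ j"
  by (simp add: matrix_matrix_mult_def diag_mat_def if_distrib cong: if_cong)

lemma matrix_inv_diag_mat:
  fixes d :: "real^'n"
  assumes "\<And>j. d $ j \<noteq> 0"
  shows "matrix_inv (diag_mat d) = diag_mat (\<chi> j. 1 / d $ j)"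
  by (rule matrix_inv_eqI; unfold vec_eq_iff matrix_mult_diag_mat)
     (auto simp: mat_def diag_mat_def assms)

section \<open>The feasible set and the SML estimator\<close>

lemma Bmat_mult_matrix_inv_diag_mat:
  fixes Om :: "real^'n^'n"
  assumes "\<And>j. 0 < phi $ j"
  shows "Bmat Om ** matrix_inv (diag_mat phi) = (\<chi> i j. Om $ i $ j / (Om $ j $ j * phi $ j))"
proof -
  have inv: "matrix_inv (diag_mat phi) = diag_mat (\<chi> j. 1 / phi $ j)"
    using assms by (intro matrix_inv_diag_mat) (metis less_irrefl)
  show ?thesis
    unfolding inv Bmat_def by (simp add: vec_eq_iff matrix_mult_diag_mat)
qed

lemma Bmat_ratio:
  fixes Om :: "real^'n^'n"
  assumes "sym_posdef Om" "Om $ j $ k \<noteq> 0"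
  shows "Bmat Om $ k $ j / Bmat Om $ j $ k = Om $ k $ k / Om $ j $ j"
  using assms sym_posdef_entry_sym[OF assms(1), of j k]
    sym_posdef_diag_pos[OF assms(1), of j] sym_posdef_diag_pos[OF assms(1), of k]
  by (simp add: Bmat_def field_simps)

text \<open>The feasible set is the ray through \<open>\<phi>\<^sup>*\<close>: symmetry of \<open>B D\<^sub>\<phi>\<^sup>-\<^sup>1\<close> in the entries
  \<open>(j, k)\<close> and \<open>(k, j)\<close> forces \<open>\<omega>\<^sub>j\<^sub>j \<phi>\<^sub>j = \<omega>\<^sub>k\<^sub>k \<phi>\<^sub>k\<close>, and along the ray \<open>B D\<^sub>\<phi>\<^sup>-\<^sup>1\<close> is a
  positive multiple of the precision matrix.\<close>

lemma feasible_Bmat_iff: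
  fixes Om :: "real^'n^'n"
  assumes Om: "sym_posdef Om" and nz: "\<And>j. Om $ j $ k \<noteq> 0"
  shows "phi \<in> feasible (Bmat Om) \<longleftrightarrow> (\<exists>c>0. \<forall>j. phi $ j = c / Om $ j $ j)"
proof
  assume "phi \<in> feasible (Bmat Om)"
  then have pos: "\<And>j. 0 < phi $ j"
    and sym: "sym_posdef (\<chi> i j. Om $ i $ j / (Om $ j $ j * phi $ j))"
    unfolding feasible_def by (auto simp: Bmat_mult_matrix_inv_diag_mat)
  have balance: "Om $ j $ j * phi $ j = Om $ k $ k * phi $ k" for j
  proof -
    have "Om $ j $ k / (Om $ k $ k * phi $ k) = Om $ j $ k / (Om $ j $ j * phi $ j)"
      using sym_posdef_entry_sym[OF sym, of j k] sym_posdef_entry_sym[OF Om, of k j] by simp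
    then show ?thesis using nz[of j] by (simp add: divide_cancel_left)
  qed
  have "phi $ j = Om $ k $ k * phi $ k / Om $ j $ j" for j
    using balance[of j] sym_posdef_diag_pos[OF Om, of j] by (metis less_irrefl nonzero_mult_div_cancel_left)
  moreover have "0 < Om $ k $ k * phi $ k"
    using sym_posdef_diag_pos[OF Om, of k] pos[of k] by simp
  ultimately show "\<exists>c>0. \<forall>j. phi $ j = c / Om $ j $ j" by blast
next
  assume "\<exists>c>0. \<forall>j. phi $ j = c / Om $ j $ j"
  then obtain c where c: "c > 0" and phi: "\<And>j. phi $ j = c / Om $ j $ j" by blast
  have pos: "\<And>j. 0 < phi $ j" using phi c sym_posdef_diag_pos[OF Om] by simp
  have "Om $ j $ j * phi $ j = c" for j
    using phi[of j] sym_posdef_diag_pos[OF Om, of j] by simp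
  then have "Bmat Om ** matrix_inv (diag_mat phi) = (\<chi> i j. Om $ i $ j / c)"
    unfolding Bmat_mult_matrix_inv_diag_mat[OF pos] by simp
  then show "phi \<in> feasible (Bmat Om)"
    unfolding feasible_def using pos sym_posdef_divide[OF Om c] by simp
qed

lemma feasible_Bmat_eq:
  fixes Om :: "real^'n^'n"
  assumes Om: "sym_posdef Om" and nz: "\<And>j. Om $ j $ k \<noteq> 0"
  shows "feasible (Bmat Om) =
           {phi. 0 < phi $ k \<and> (\<forall>j. phi $ j = (Bmat Om $ k $ j / Bmat Om $ j $ k) * phi $ k)}"
proof -
  have dpos: "\<And>j. 0 < Om $ j $ j" using sym_posdef_diag_pos[OF Om] .
  have ray_iff: "(\<exists>c>0. \<forall>j. phi $ j = c / Om $ j $ j) \<longleftrightarrow>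
        0 < phi $ k \<and> (\<forall>j. phi $ j = Om $ k $ k / Om $ j $ j * phi $ k)" for phi :: "real^'n"
  proof
    assume "\<exists>c>0. \<forall>j. phi $ j = c / Om $ j $ j"
    then obtain c where "c > 0" "\<And>j. phi $ j = c / Om $ j $ j" by blast
    then show "0 < phi $ k \<and> (\<forall>j. phi $ j = Om $ k $ k / Om $ j $ j * phi $ k)"
      using dpos[of k] by simp
  next
    assume ray: "0 < phi $ k \<and> (\<forall>j. phi $ j = Om $ k $ k / Om $ j $ j * phi $ k)"
    have "0 < Om $ k $ k * phi $ k" using conjunct1[OF ray] dpos[of k] by simp
    moreover have "phi $ j = Om $ k $ k * phi $ k / Om $ j $ j" for j
    proof -
      have "phi $ j = Om $ k $ k / Om $ j $ j * phi $ k" using conjunct2[OF ray] ..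
      also have "\<dots> = Om $ k $ k * phi $ k / Om $ j $ j" by simp
      finally show ?thesis .
    qed
    ultimately show "\<exists>c>0. \<forall>j. phi $ j = c / Om $ j $ j" by blast
  qed
  show ?thesis
    by (intro set_eqI) (simp only: feasible_Bmat_iff[OF Om nz] Bmat_ratio[OF Om nz] mem_Collect_eq ray_iff)
qed

lemma phi_sml_Bmat:
  fixes Om :: "real^'n^'n"
  assumes Om: "sym_posdef Om" and nz: "\<And>j. Om $ j $ k \<noteq> 0"
  shows "phi_sml k S (Bmat Om) $ j = trace (S ** Om) / (real CARD('n) * Om $ j $ j)"
proof -
  have dnz: "\<And>j. Om $ j $ j \<noteq> 0" using sym_posdef_diag_pos[OF Om] by (metis less_irrefl)
  have "row k (Bmat Om) $ j \<noteq> 0" for j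
    using nz[of j] sym_posdef_entry_sym[OF Om, of j k] dnz[of j] by (simp add: row_def Bmat_def)
  then have inv: "matrix_inv (diag_mat (row k (Bmat Om))) = diag_mat (\<chi> j. 1 / row k (Bmat Om) $ j)"
    by (rule matrix_inv_diag_mat)
  have "(S ** Bmat Om ** diag_mat (column k (Bmat Om)) ** matrix_inv (diag_mat (row k (Bmat Om)))) $ a $ a
      = (S ** Bmat Om) $ a $ a * (Bmat Om $ a $ k / Bmat Om $ k $ a)" for a
    unfolding inv matrix_mult_diag_mat by (simp add: row_def column_def)
  also have "(S ** Bmat Om) $ a $ a * (Bmat Om $ a $ k / Bmat Om $ k $ a) = (S ** Om) $ a $ a / Om $ k $ k" for a
  proof -
    have "(S ** Bmat Om) $ a $ a = (S ** Om) $ a $ a / Om $ a $ a"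
      by (simp add: matrix_matrix_mult_def Bmat_def sum_divide_distrib)
    then show ?thesis
      using Bmat_ratio[OF Om nz, of a] dnz[of a] dnz[of k] sym_posdef_entry_sym[OF Om, of a k] nz[of a]
      by (simp add: Bmat_def)
  qed
  finally have "trace (S ** Bmat Om ** diag_mat (column k (Bmat Om)) ** matrix_inv (diag_mat (row k (Bmat Om))))
      = trace (S ** Om) / Om $ k $ k"
    unfolding trace_def by (simp add: sum_divide_distrib)
  then show ?thesis
    unfolding phi_sml_def vec_lambda_beta Bmat_ratio[OF Om nz] using dnz[of k] by simp
qed

lemma trace_sample_cov:
  fixes A :: "real^'n^'n"
  shows "trace (sample_cov n x ** A) = (\<Sum>i<n. x i \<bullet> (A *v x i)) / real n"
proof -
  have "trace (sample_cov n x ** A)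
      = (\<Sum>a\<in>UNIV. \<Sum>b\<in>UNIV. \<Sum>i<n. x i $ b * (A $ b $ a * x i $ a) / real n)"
    by (simp add: trace_def matrix_matrix_mult_def sample_cov_def sum_divide_distrib
        sum_distrib_left sum_distrib_right mult_ac)
  also have "\<dots> = (\<Sum>a\<in>UNIV. \<Sum>i<n. \<Sum>b\<in>UNIV. x i $ b * (A $ b $ a * x i $ a) / real n)"
    by (rule sum.cong[OF refl], rule sum.swap)
  also have "\<dots> = (\<Sum>i<n. \<Sum>a\<in>UNIV. \<Sum>b\<in>UNIV. x i $ b * (A $ b $ a * x i $ a) / real n)"
    by (rule sum.swap)
  also have "\<dots> = (\<Sum>i<n. \<Sum>b\<in>UNIV. \<Sum>a\<in>UNIV. x i $ b * (A $ b $ a * x i $ a) / real n)"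
    by (rule sum.cong[OF refl], rule sum.swap)
  also have "\<dots> = (\<Sum>i<n. x i \<bullet> (A *v x i)) / real n"
    by (simp add: inner_vec_def matrix_vector_mult_def sum_distrib_left sum_divide_distrib)
  finally show ?thesis .
qed

lemma loglik_Bmat_ray:
  fixes Om :: "real^'n^'n"
  assumes dpos: "\<And>j. 0 < Om $ j $ j" and c: "0 < c" and psi: "\<And>j. psi $ j = c / Om $ j $ j"
  shows "loglik S (Bmat Om) psi
           = (\<Sum>j\<in>UNIV. ln (Om $ j $ j)) - (real CARD('n) * ln c + trace (S ** Om) / c)"
proof -
  have "ln (psi $ j) + (S ** Bmat Om) $ j $ j / psi $ j = ln c - ln (Om $ j $ j) + (S ** Om) $ j $ j / c"
    for j
  proof -
    have "(S ** Bmat Om) $ j $ j = (S ** Om) $ j $ j / Om $ j $ j"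
      by (simp add: matrix_matrix_mult_def Bmat_def sum_divide_distrib)
    then show ?thesis using c dpos[of j] by (simp add: psi ln_div)
  qed
  then show ?thesis
    unfolding loglik_def trace_def by (simp add: sum.distrib sum_subtractf sum_divide_distrib)
qed

lemma ln_plus_divide_unique_min:
  fixes p T c :: real
  assumes "0 < p" "0 < T" "0 < c" "c \<noteq> T / p"
  shows "p * ln (T / p) + p < p * ln c + T / c"
proof -
  define r where "r = (T / p) / c"
  have r: "0 < r" "r \<noteq> 1" using assms by (auto simp: r_def field_simps)
  then have "ln r < r - 1" using ln_le_minus_one ln_eq_minus_one by force
  moreover have "ln r = ln (T / p) - ln c"
    unfolding r_def using assms by (intro ln_divide_pos) auto
  moreover have "T / c = p * r" using assms by (simp add: r_def field_simps)
  ultimately have "p * (ln (T / p) + 1) < p * (ln c + T / c / p)"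
    using assms(1) by (intro mult_strict_left_mono) auto
  then show ?thesis using assms(1) by (simp add: algebra_simps)
qed

text \<open>On the ray \<open>\<phi> = c \<phi>\<^sup>*\<close> the log-likelihood is, up to a constant,
  \<open>-(p log c + tr(S\<^sub>n \<Omega>) / c)\<close>, which is maximal exactly at \<open>c = tr(S\<^sub>n \<Omega>) / p\<close>.\<close>

lemma phi_sml_unique_argmax:
  fixes Om :: "real^'n^'n"
  assumes Om: "sym_posdef Om" and nz: "\<And>j. Om $ j $ k \<noteq> 0" and T: "0 < trace (S ** Om)"
  shows "phi_sml k S (Bmat Om) \<in> feasible (Bmat Om)"
    and "\<And>psi. psi \<in> feasible (Bmat Om) \<Longrightarrow> psi \<noteq> phi_sml k S (Bmat Om) \<Longrightarrow>
           loglik S (Bmat Om) psi < loglik S (Bmat Om) (phi_sml k S (Bmat Om))"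
proof -
  define p where "p = real CARD('n)"
  define c where "c = trace (S ** Om) / p"
  have dpos: "\<And>j. 0 < Om $ j $ j" using sym_posdef_diag_pos[OF Om] .
  have p: "0 < p" by (simp add: p_def)
  have c: "0 < c" using T p by (simp add: c_def)
  have sml: "phi_sml k S (Bmat Om) $ j = c / Om $ j $ j" for j
    unfolding phi_sml_Bmat[OF Om nz] c_def p_def by simp
  show "phi_sml k S (Bmat Om) \<in> feasible (Bmat Om)"
    unfolding feasible_Bmat_iff[OF Om nz] using c sml by blast
  fix psi assume "psi \<in> feasible (Bmat Om)" and ne: "psi \<noteq> phi_sml k S (Bmat Om)"
  then obtain c' where c': "0 < c'" and psi: "\<And>j. psi $ j = c' / Om $ j $ j"
    unfolding feasible_Bmat_iff[OF Om nz] by blast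
  have "c' \<noteq> c" using ne by (auto simp: vec_eq_iff psi sml)
  then have "p * ln c + p < p * ln c' + trace (S ** Om) / c'"
    using ln_plus_divide_unique_min[OF p T c'] by (simp add: c_def)
  moreover have "trace (S ** Om) / c = p" using p T by (simp add: c_def)
  ultimately show "loglik S (Bmat Om) psi < loglik S (Bmat Om) (phi_sml k S (Bmat Om))"
    unfolding loglik_Bmat_ray[OF dpos c' psi] loglik_Bmat_ray[OF dpos c sml] p_def by simp
qed

section \<open>Variables with a chi-squared moment generating function\<close>

lemma exp_le_Taylor_quadratic_nonpos:
  fixes y :: real
  assumes "y \<le> 0"
  shows "exp y \<le> 1 + y + y\<^sup>2 / 2"
proof -
  let ?f = "\<lambda>t::real. 1 + t + t\<^sup>2 / 2 - exp t"
  have "?f 0 \<le> ?f y"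
  proof (rule DERIV_nonpos_imp_nonincreasing[OF assms])
    fix x :: real assume "y \<le> x" "x \<le> 0"
    have "(?f has_real_derivative (1 + x - exp x)) (at x)"
      by (auto intro!: derivative_eq_intros simp: power2_eq_square)
    then show "\<exists>d. (?f has_real_derivative d) (at x) \<and> d \<le> 0"
      using exp_ge_add_one_self[of x] by (intro exI conjI) (auto simp: algebra_simps)
  qed
  then show ?thesis by simp
qed

lemma ln_le_half_diff_inverse:
  fixes x :: real
  assumes "1 \<le> x"
  shows "ln x \<le> (x - 1 / x) / 2"
proof -
  let ?f = "\<lambda>t::real. (t - 1 / t) / 2 - ln t"
  have "?f 1 \<le> ?f x"
  proof (rule DERIV_nonneg_imp_nondecreasing[OF assms])
    fix t :: real assume "1 \<le> t" "t \<le> x"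
    then have "(?f has_real_derivative ((1 + 1 / t\<^sup>2) / 2 - 1 / t)) (at t)"
      by (auto intro!: derivative_eq_intros simp: power2_eq_square field_simps)
    moreover have "(1 + 1 / t\<^sup>2) / 2 - 1 / t = (t - 1)\<^sup>2 / (2 * t\<^sup>2)"
      using \<open>1 \<le> t\<close> by (simp add: field_simps power2_eq_square)
    ultimately show "\<exists>d. (?f has_real_derivative d) (at t) \<and> 0 \<le> d" by fastforce
  qed
  then show ?thesis by simp
qed

lemma ln_one_plus_ge_quadratic:
  fixes v :: real
  assumes "0 \<le> v"
  shows "v - v\<^sup>2 / 2 \<le> ln (1 + v)"
proof -
  let ?f = "\<lambda>t::real. ln (1 + t) - (t - t\<^sup>2 / 2)"
  have "?f 0 \<le> ?f v"
  proof (rule DERIV_nonneg_imp_nondecreasing[OF assms])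
    fix x :: real assume x: "0 \<le> x" "x \<le> v"
    then have "(?f has_real_derivative (x\<^sup>2 / (1 + x))) (at x)"
      by (auto intro!: derivative_eq_intros simp: field_simps power2_eq_square)
    then show "\<exists>d. (?f has_real_derivative d) (at x) \<and> 0 \<le> d"
      using x by (intro exI[of _ "x\<^sup>2 / (1 + x)"] conjI) auto
  qed
  then show ?thesis by simp
qed

text \<open>Only the MGF on \<open>l < 1/2\<close> is assumed; the moments are read off from it by squeezing
  difference quotients of the MGF at \<open>l = 0\<close>.\<close>

locale chi_squared_mgf = prob_space M for M :: "'a measure" +
  fixes Z :: "'a \<Rightarrow> real" and N :: real
  assumes Z_measurable [measurable]: "Z \<in> borel_measurable M"
    and Z_nonneg: "\<And>w. w \<in> space M \<Longrightarrow> 0 \<le> Z w"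
    and N_pos: "0 < N"
    and nn_integral_exp: "\<And>l. l < 1/2 \<Longrightarrow>
          (\<integral>\<^sup>+w. ennreal (exp (l * Z w)) \<partial>M) = ennreal ((1 - 2 * l) powr (- N / 2))"
begin

lemma integrable_exp:
  assumes "l < 1/2"
  shows "integrable M (\<lambda>w. exp (l * Z w))"
  using nn_integral_exp[OF assms] by (intro integrableI_nn_integral_finite) auto

lemma expectation_exp:
  assumes "l < 1/2"
  shows "expectation (\<lambda>w. exp (l * Z w)) = (1 - 2 * l) powr (- N / 2)"
proof -
  have "expectation (\<lambda>w. exp (l * Z w)) = enn2real (\<integral>\<^sup>+w. ennreal (exp (l * Z w)) \<partial>M)"
    by (rule integral_eq_nn_integral) auto
  then show ?thesis unfolding nn_integral_exp[OF assms] by simp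
qed

lemma integrable_Z: "integrable M Z"
proof (rule Bochner_Integration.integrable_bound)
  show "integrable M (\<lambda>w. 4 * exp (1/4 * Z w))"
    using integrable_exp[of "1/4"] by simp
  have "Z w \<le> 4 * exp (1/4 * Z w)" for w
    using exp_ge_add_one_self[of "1/4 * Z w"] by linarith
  then show "AE w in M. norm (Z w) \<le> norm (4 * exp (1/4 * Z w))"
    using Z_nonneg by (intro AE_I2) simp
qed simp

lemma integrable_Z_squared: "integrable M (\<lambda>w. (Z w)\<^sup>2)"
proof (rule Bochner_Integration.integrable_bound)
  show "integrable M (\<lambda>w. 32 * exp (1/4 * Z w))"
    using integrable_exp[of "1/4"] by simp
  have "(Z w)\<^sup>2 \<le> 32 * exp (1/4 * Z w)" if "w \<in> space M" for w
    using exp_lower_Taylor_quadratic[of "Z w / 4"] Z_nonneg[OF that] by (simp add: power2_eq_square)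
  then show "AE w in M. norm ((Z w)\<^sup>2) \<le> norm (32 * exp (1/4 * Z w))"
    by (intro AE_I2) auto
qed simp

lemma expectation_quadratic:
  "expectation (\<lambda>w. a + b * Z w + c * (Z w)\<^sup>2) = a + b * expectation Z + c * expectation (\<lambda>w. (Z w)\<^sup>2)"
  using integrable_Z integrable_Z_squared by (simp add: prob_space)

lemma expectation_Z: "expectation Z = N"
proof -
  have bound: "1 + l * expectation Z \<le> (1 - 2 * l) powr (- N / 2)" if "l < 1/2" for l
  proof -
    have "expectation (\<lambda>w. 1 + l * Z w + 0 * (Z w)\<^sup>2) \<le> expectation (\<lambda>w. exp (l * Z w))"
      using integrable_Z integrable_Z_squared integrable_exp[OF that] exp_ge_add_one_self
      by (intro integral_mono) auto
    then show ?thesis unfolding expectation_quadratic expectation_exp[OF that] by simp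
  qed
  have right: "\<forall>\<^sub>F l in at_right 0. 0 < l \<and> l < (1/2 :: real)"
    unfolding eventually_at_right_field by (intro exI[of _ "1/2"]) auto
  have left: "\<forall>\<^sub>F l in at_left 0. l < (0 :: real)"
    unfolding eventually_at_left_field by (intro exI[of _ "-1"]) auto
  have "((\<lambda>l. ((1 - 2 * l) powr (- N / 2) - 1) / l) \<longlongrightarrow> N) (at_right 0)"
       "((\<lambda>l. ((1 - 2 * l) powr (- N / 2) - 1) / l) \<longlongrightarrow> N) (at_left 0)"
    using N_pos by (real_asymp simp: algebra_simps)+
  moreover have "\<forall>\<^sub>F l in at_right 0. expectation Z \<le> ((1 - 2 * l) powr (- N / 2) - 1) / l"
    using right by eventually_elim (use bound in \<open>auto simp: pos_le_divide_eq algebra_simps\<close>)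
  moreover have "\<forall>\<^sub>F l in at_left 0. ((1 - 2 * l) powr (- N / 2) - 1) / l \<le> expectation Z"
    using left by eventually_elim (use bound in \<open>auto simp: neg_divide_le_eq algebra_simps\<close>)
  ultimately show ?thesis
    by (intro antisym tendsto_lowerbound tendsto_upperbound) (auto simp: trivial_limit_at_left_real)
qed

lemma expectation_Z_squared: "expectation (\<lambda>w. (Z w)\<^sup>2) = N * (N + 2)"
proof -
  have lower: "1 + l * N + l\<^sup>2 / 2 * expectation (\<lambda>w. (Z w)\<^sup>2) \<le> (1 - 2 * l) powr (- N / 2)"
    if "0 \<le> l" "l < 1/2" for l
  proof -
    have "expectation (\<lambda>w. 1 + l * Z w + l\<^sup>2 / 2 * (Z w)\<^sup>2) \<le> expectation (\<lambda>w. exp (l * Z w))"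
      using integrable_Z integrable_Z_squared integrable_exp[OF that(2)]
        exp_lower_Taylor_quadratic[of "l * Z _"] Z_nonneg that(1)
      by (intro integral_mono) (auto simp: power_mult_distrib)
    then show ?thesis unfolding expectation_quadratic expectation_exp[OF that(2)] expectation_Z .
  qed
  have upper: "(1 - 2 * l) powr (- N / 2) \<le> 1 + l * N + l\<^sup>2 / 2 * expectation (\<lambda>w. (Z w)\<^sup>2)"
    if "l \<le> 0" for l
  proof -
    have "l * Z w \<le> 0" if "w \<in> space M" for w
      using Z_nonneg[OF that] \<open>l \<le> 0\<close> by (simp add: mult_nonpos_nonneg)
    then have "expectation (\<lambda>w. exp (l * Z w)) \<le> expectation (\<lambda>w. 1 + l * Z w + l\<^sup>2 / 2 * (Z w)\<^sup>2)"
      using integrable_Z integrable_Z_squared integrable_exp[of l] that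
        exp_le_Taylor_quadratic_nonpos[of "l * Z _"]
      by (intro integral_mono) (auto simp: power_mult_distrib)
    moreover have "l < 1/2" using that by simp
    ultimately show ?thesis unfolding expectation_quadratic expectation_exp[OF \<open>l < 1/2\<close>] expectation_Z by blast
  qed
  have right: "\<forall>\<^sub>F l in at_right 0. 0 < l \<and> l < (1/2 :: real)"
    unfolding eventually_at_right_field by (intro exI[of _ "1/2"]) auto
  have left: "\<forall>\<^sub>F l in at_left 0. l < (0 :: real)"
    unfolding eventually_at_left_field by (intro exI[of _ "-1"]) auto
  let ?q = "\<lambda>l. 2 * ((1 - 2 * l) powr (- N / 2) - 1 - l * N) / l\<^sup>2"
  have "(?q \<longlongrightarrow> N * (N + 2)) (at_right 0)" "(?q \<longlongrightarrow> N * (N + 2)) (at_left 0)"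
    using N_pos by (real_asymp simp: algebra_simps)+
  moreover have "\<forall>\<^sub>F l in at_right 0. expectation (\<lambda>w. (Z w)\<^sup>2) \<le> ?q l"
    using right
  proof eventually_elim
    case (elim l)
    then show ?case using lower[of l] by (simp add: pos_le_divide_eq algebra_simps)
  qed
  moreover have "\<forall>\<^sub>F l in at_left 0. ?q l \<le> expectation (\<lambda>w. (Z w)\<^sup>2)"
    using left
  proof eventually_elim
    case (elim l)
    then show ?case using upper[of l] by (simp add: pos_divide_le_eq algebra_simps)
  qed
  ultimately show ?thesis
    by (intro antisym tendsto_lowerbound tendsto_upperbound) (auto simp: trivial_limit_at_left_real)
qed

lemma expectation_relative_error_squared: "expectation (\<lambda>w. (Z w / N - 1)\<^sup>2) = 2 / N"
proof -
  have square: "(\<lambda>w. (Z w / N - 1)\<^sup>2) = (\<lambda>w. 1 + (- 2 / N) * Z w + (1 / N\<^sup>2) * (Z w)\<^sup>2)"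
    using N_pos by (auto simp: fun_eq_iff field_simps power2_eq_square)
  show ?thesis
    using N_pos unfolding square expectation_quadratic expectation_Z expectation_Z_squared
    by (simp add: field_simps power2_eq_square)
qed

lemma set_integrable_exp:
  assumes "l < 1/2"
  shows "set_integrable M (space M) (\<lambda>w. exp (l * Z w))"
  unfolding set_integrable_def by (intro integrable_mult_indicator integrable_exp assms) simp

lemma prob_ge_Chernoff:
  assumes "0 < l" "l < 1/2"
  shows "prob {w \<in> space M. a \<le> Z w} \<le> exp (- l * a) * (1 - 2 * l) powr (- N / 2)"
  using Chernoff_ineq_ge[OF assms(1) set_integrable_exp[OF assms(2)], of a]
  by (simp add: set_integral_space integrable_exp[OF assms(2)] expectation_exp[OF assms(2)])

lemma prob_le_Chernoff:
  assumes "0 < s"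
  shows "prob {w \<in> space M. Z w \<le> a} \<le> exp (s * a) * (1 + 2 * s) powr (- N / 2)"
proof -
  have "- s < 1/2" using assms by simp
  from Chernoff_ineq_le[OF assms, of "space M" Z a] set_integrable_exp[OF this]
    integrable_exp[OF this] expectation_exp[OF this]
  show ?thesis by (simp add: set_integral_space)
qed

lemma AE_Z_pos: "AE w in M. 0 < Z w"
proof -
  have "prob {w \<in> space M. Z w \<le> 0} \<le> 0"
  proof (rule tendsto_lowerbound)
    show "((\<lambda>s. (1 + 2 * s) powr (- N / 2)) \<longlongrightarrow> 0) at_top" using N_pos by real_asymp
    show "\<forall>\<^sub>F s in at_top. prob {w \<in> space M. Z w \<le> 0} \<le> (1 + 2 * s) powr (- N / 2)"
      using eventually_gt_at_top[of 0] by eventually_elim (use prob_le_Chernoff[of _ 0] in auto)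
  qed simp
  then have "{w \<in> space M. Z w \<le> 0} \<in> null_sets M"
    by (simp add: null_sets_def emeasure_eq_measure measure_nonneg antisym)
  then show ?thesis
    by (rule AE_I') auto
qed

lemma upper_tail:
  assumes u: "0 < u"
  shows "prob {w \<in> space M. N * (1 + 2 * u + 2 * u\<^sup>2) \<le> Z w} \<le> exp (- N * u\<^sup>2)"
proof -
  define l where "l = u / (1 + 2 * u)"
  define a where "a = N * (1 + 2 * u + 2 * u\<^sup>2)"
  have l: "0 < l" "l < 1/2" using u by (auto simp: l_def field_simps)
  have "(1 - 2 * l) powr (- N / 2) = exp (N / 2 * ln (1 + 2 * u))"
    using u by (simp add: l_def powr_def ln_div field_simps)
  then have "prob {w \<in> space M. a \<le> Z w} \<le> exp (- l * a) * exp (N / 2 * ln (1 + 2 * u))"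
    using prob_ge_Chernoff[OF l, of a] by simp
  also have "\<dots> = exp (N / 2 * ln (1 + 2 * u) - l * a)"
    by (simp add: exp_add[symmetric])
  also have "\<dots> \<le> exp (N / 2 * (((1 + 2 * u) - 1 / (1 + 2 * u)) / 2) - l * a)"
    using ln_le_half_diff_inverse[of "1 + 2 * u"] u N_pos by simp
  also have "N / 2 * (((1 + 2 * u) - 1 / (1 + 2 * u)) / 2) - l * a = - N * u\<^sup>2"
  proof -
    have d: "1 + 2 * u \<noteq> 0" using u by simp
    have first: "N / 2 * (((1 + 2 * u) - 1 / (1 + 2 * u)) / 2) = N * (u + u\<^sup>2) / (1 + 2 * u)"
      using d by (simp add: field_simps power2_eq_square)
    have second: "l * a = N * (u + u\<^sup>2 + u\<^sup>2 * (1 + 2 * u)) / (1 + 2 * u)"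
      by (simp add: l_def a_def algebra_simps add_divide_distrib power2_eq_square)
    have "N * (u + u\<^sup>2) - N * (u + u\<^sup>2 + u\<^sup>2 * (1 + 2 * u)) = - N * u\<^sup>2 * (1 + 2 * u)"
      by (simp add: algebra_simps)
    then show ?thesis
      unfolding first second diff_divide_distrib[symmetric] using d by simp
  qed
  finally show ?thesis by (simp add: a_def)
qed

lemma lower_tail:
  assumes u: "0 < u"
  shows "prob {w \<in> space M. Z w \<le> N * (1 - 2 * u)} \<le> exp (- N * u\<^sup>2)"
proof -
  have "(1 + 2 * u) powr (- N / 2) = exp (- (N / 2 * ln (1 + 2 * u)))"
    using u by (simp add: powr_def)
  then have "prob {w \<in> space M. Z w \<le> N * (1 - 2 * u)}
      \<le> exp (u * (N * (1 - 2 * u))) * exp (- (N / 2 * ln (1 + 2 * u)))"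
    using prob_le_Chernoff[OF u, of "N * (1 - 2 * u)"] by simp
  also have "\<dots> = exp (u * (N * (1 - 2 * u)) - N / 2 * ln (1 + 2 * u))"
    by (simp add: exp_add[symmetric])
  also have "\<dots> \<le> exp (u * (N * (1 - 2 * u)) - N / 2 * (2 * u - (2 * u)\<^sup>2 / 2))"
    using ln_one_plus_ge_quadratic[of "2 * u"] u N_pos by simp
  also have "u * (N * (1 - 2 * u)) - N / 2 * (2 * u - (2 * u)\<^sup>2 / 2) = - N * u\<^sup>2"
    by (simp add: field_simps power2_eq_square)
  finally show ?thesis .
qed

lemma relative_deviation:
  assumes x: "0 < x"
  shows "prob {w \<in> space M. 2 * sqrt (x / N) + 2 * x / N < \<bar>Z w / N - 1\<bar>} \<le> 2 * exp (- x)"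
proof -
  define u where "u = sqrt (x / N)"
  have u: "0 < u" using x N_pos by (simp add: u_def)
  have u2: "u\<^sup>2 = x / N" using x N_pos by (simp add: u_def)
  have bound: "2 * sqrt (x / N) + 2 * x / N = 2 * u + 2 * u\<^sup>2"
    by (simp only: u_def[symmetric]) (simp add: u2)
  let ?hi = "{w \<in> space M. N * (1 + 2 * u + 2 * u\<^sup>2) \<le> Z w}"
  let ?lo = "{w \<in> space M. Z w \<le> N * (1 - 2 * u)}"
  have "{w \<in> space M. 2 * sqrt (x / N) + 2 * x / N < \<bar>Z w / N - 1\<bar>} \<subseteq> ?hi \<union> ?lo"
  proof
    fix w assume w: "w \<in> {w \<in> space M. 2 * sqrt (x / N) + 2 * x / N < \<bar>Z w / N - 1\<bar>}"
    show "w \<in> ?hi \<union> ?lo"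
    proof (cases "Z w \<le> N * (1 - 2 * u)")
      case False
      then have "1 - 2 * u < Z w / N" using N_pos by (simp add: field_simps)
      moreover have far: "2 * u + 2 * u\<^sup>2 < \<bar>Z w / N - 1\<bar>" using w unfolding bound by simp
      ultimately have "1 + 2 * u + 2 * u\<^sup>2 < Z w / N"
        using zero_le_power2[of u] by (cases "0 \<le> Z w / N - 1") auto
      then show ?thesis using w N_pos by (simp add: field_simps)
    qed (use w in simp)
  qed
  then have "prob {w \<in> space M. 2 * sqrt (x / N) + 2 * x / N < \<bar>Z w / N - 1\<bar>} \<le> prob (?hi \<union> ?lo)"
    by (intro finite_measure_mono) measurable
  also have "\<dots> \<le> prob ?hi + prob ?lo"
    by (intro measure_Un_le) measurable
  also have "\<dots> \<le> 2 * exp (- x)"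
    using upper_tail[OF u] lower_tail[OF u] N_pos by (simp add: u2)
  finally show ?thesis .
qed

end

section \<open>Quadratic forms of Gaussian samples\<close>

lemma borel_measurable_quadratic_form [measurable]:
  "(\<lambda>x::real^'n. x \<bullet> (A *v x)) \<in> borel_measurable borel"
  by (intro borel_measurable_continuous_onI continuous_intros)

lemma quadratic_form_scaleR: "(c *\<^sub>R x) \<bullet> (A *v (c *\<^sub>R x)) = c\<^sup>2 * (x \<bullet> (A *v (x::real^'n)))"
  by (simp add: matrix_vector_mult_scaleR power2_eq_square)

lemma nn_integral_lborel_quadratic_form_scale:
  fixes A :: "real^'n^'n" and H :: "real \<Rightarrow> ennreal"
  assumes H [measurable]: "H \<in> borel_measurable borel" and s: "0 < s"
  shows "(\<integral>\<^sup>+x. H (s * (x \<bullet> (A *v x))) \<partial>lborel)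
       = ennreal (s powr (- real CARD('n) / 2)) * (\<integral>\<^sup>+x. H (x \<bullet> (A *v x)) \<partial>lborel)"
proof -
  define c where "c = 1 / sqrt s"
  have c: "c \<noteq> 0" "0 < c" using s by (auto simp: c_def)
  have jacobian: "\<bar>c\<bar> ^ DIM(real^'n) = s powr (- real CARD('n) / 2)"
  proof -
    have "\<bar>c\<bar> ^ DIM(real^'n) = inverse (sqrt s ^ CARD('n))"
      using c by (simp add: c_def power_one_over divide_inverse power_inverse)
    also have "sqrt s ^ CARD('n) = s powr (real CARD('n) / 2)"
      using s by (simp add: powr_realpow[symmetric] powr_half_sqrt[symmetric] powr_powr)
    finally show ?thesis by (simp add: powr_minus)
  qed
  have "(\<integral>\<^sup>+x. H (s * (x \<bullet> (A *v x))) \<partial>lborel)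
      = (\<integral>\<^sup>+x. H (s * (x \<bullet> (A *v x)))
           \<partial>density (distr lborel borel (\<lambda>x. 0 + c *\<^sub>R x)) (\<lambda>_. \<bar>c\<bar> ^ DIM(real^'n)))"
    by (simp only: lborel_affine[OF c(1), symmetric])
  also have "\<dots> = (\<integral>\<^sup>+x. ennreal (\<bar>c\<bar> ^ DIM(real^'n)) * H (s * ((c *\<^sub>R x) \<bullet> (A *v (c *\<^sub>R x)))) \<partial>lborel)"
    by (simp add: nn_integral_density nn_integral_distr)
  also have "\<dots> = (\<integral>\<^sup>+x. ennreal (\<bar>c\<bar> ^ DIM(real^'n)) * H (x \<bullet> (A *v x)) \<partial>lborel)"
  proof -
    have "s * c\<^sup>2 = 1" using s by (simp add: c_def power_divide)
    then have "s * ((c *\<^sub>R x) \<bullet> (A *v (c *\<^sub>R x))) = x \<bullet> (A *v x)" for x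
      unfolding quadratic_form_scaleR mult.assoc[symmetric] by simp
    then show ?thesis by (simp only:)
  qed
  also have "\<dots> = ennreal (\<bar>c\<bar> ^ DIM(real^'n)) * (\<integral>\<^sup>+x. H (x \<bullet> (A *v x)) \<partial>lborel)"
    by (simp add: nn_integral_cmult)
  finally show ?thesis unfolding jacobian .
qed

lemma nn_integral_distributed_mvn:
  assumes D: "distributed M lborel Y (\<lambda>x. ennreal (mvn_density Sig x))"
    and g [measurable]: "g \<in> borel_measurable borel"
  shows "(\<integral>\<^sup>+w. g (Y w) \<partial>M) = (\<integral>\<^sup>+x. ennreal (mvn_density Sig x) * g x \<partial>lborel)"
proof -
  have [measurable]: "Y \<in> borel_measurable M" "(\<lambda>x. ennreal (mvn_density Sig x)) \<in> borel_measurable lborel"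
    using distributed_measurable[OF D] distributed_borel_measurable[OF D] by simp_all
  have "(\<integral>\<^sup>+w. g (Y w) \<partial>M) = (\<integral>\<^sup>+x. g x \<partial>distr M lborel Y)"
    by (rule nn_integral_distr[symmetric]) auto
  also have "\<dots> = (\<integral>\<^sup>+x. ennreal (mvn_density Sig x) * g x \<partial>lborel)"
    unfolding distributed_distr_eq_density[OF D] by (rule nn_integral_density) auto
  finally show ?thesis .
qed

lemma nn_integral_mvn_exp_quadratic_form:
  fixes Sig :: "real^'n^'n"
  assumes "prob_space M" and D: "distributed M lborel Y (\<lambda>x. ennreal (mvn_density Sig x))"
    and l: "l < 1/2"
  shows "(\<integral>\<^sup>+w. ennreal (exp (l * (Y w \<bullet> (matrix_inv Sig *v Y w)))) \<partial>M)
       = ennreal ((1 - 2 * l) powr (- real CARD('n) / 2))"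
proof -
  let ?q = "\<lambda>x. x \<bullet> (matrix_inv Sig *v x)"
  define C where "C = sqrt ((2 * pi) ^ CARD('n) * det Sig)"
  define H where "H u = ennreal (exp (- u / 2) / C)" for u
  have [measurable]: "H \<in> borel_measurable borel" unfolding H_def by measurable
  have density: "mvn_density Sig x = exp (- ?q x / 2) / C" for x
    by (simp add: mvn_density_def C_def)
  have total: "(\<integral>\<^sup>+x. H (?q x) \<partial>lborel) = 1"
    using nn_integral_distributed_mvn[OF D, of "\<lambda>_. 1"] prob_space.emeasure_space_1[OF assms(1)]
    by (simp add: H_def density)
  have "0 < C"
  proof (rule ccontr)
    assume "\<not> 0 < C"
    then have "H u = 0" for u by (simp add: H_def divide_nonneg_nonpos ennreal_eq_0_iff)
    then show False using total by simp
  qed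
  have "(\<integral>\<^sup>+w. ennreal (exp (l * ?q (Y w))) \<partial>M)
      = (\<integral>\<^sup>+x. ennreal (mvn_density Sig x) * ennreal (exp (l * ?q x)) \<partial>lborel)"
    by (rule nn_integral_distributed_mvn[OF D]) measurable
  also have "\<dots> = (\<integral>\<^sup>+x. H ((1 - 2 * l) * ?q x) \<partial>lborel)"
  proof (rule nn_integral_cong)
    fix x
    have "exp (- ?q x / 2) / C * exp (l * ?q x) = exp (- ((1 - 2 * l) * ?q x) / 2) / C"
      by (simp add: exp_add[symmetric] field_simps)
    then show "ennreal (mvn_density Sig x) * ennreal (exp (l * ?q x)) = H ((1 - 2 * l) * ?q x)"
      unfolding H_def density using \<open>0 < C\<close> by (simp add: ennreal_mult''[symmetric])
  qed
  also have "\<dots> = ennreal ((1 - 2 * l) powr (- real CARD('n) / 2))"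
    using nn_integral_lborel_quadratic_form_scale[of H "1 - 2 * l" "matrix_inv Sig"] l total by simp
  finally show ?thesis .
qed

locale gaussian_sample = prob_space M for M :: "'a measure" +
  fixes n :: nat and Sig :: "real^'p^'p" and X :: "nat \<Rightarrow> 'a \<Rightarrow> real^'p"
  assumes n_pos: "1 \<le> n" and Sig: "sym_posdef Sig"
    and indep: "indep_vars (\<lambda>_. borel) X {..<n}"
    and gaussian: "\<And>i. i < n \<Longrightarrow> distributed M lborel (X i) (\<lambda>x. ennreal (mvn_density Sig x))"
begin

definition Q :: "'a \<Rightarrow> real" where
  "Q w = (\<Sum>i<n. X i w \<bullet> (matrix_inv Sig *v X i w))"

lemma X_measurable [measurable]: "i < n \<Longrightarrow> X i \<in> borel_measurable M"
  using distributed_measurable[OF gaussian] by simp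

text \<open>Each \<open>X\<^sub>i\<^sup>T \<Omega> X\<^sub>i\<close> has the MGF of \<open>\<chi>\<^sup>2\<^sub>p\<close> and the summands are independent, so the
  MGF of \<open>Q\<close> is the \<open>n\<close>-th power.\<close>

sublocale chi_squared_mgf M Q "real n * real CARD('p)"
proof
  let ?q = "\<lambda>x. x \<bullet> (matrix_inv Sig *v x)"
  show "Q \<in> borel_measurable M" unfolding Q_def by measurable
  show "0 \<le> Q w" for w
    using sym_posdef_matrix_inv[OF Sig] unfolding Q_def sym_posdef_def
    by (intro sum_nonneg) (metis inner_zero_left less_eq_real_def)
  show "0 < real n * real CARD('p)" using n_pos by simp
  fix l :: real assume l: "l < 1/2"
  let ?Y = "\<lambda>i w. ennreal (exp (l * ?q (X i w)))"
  have "indep_vars (\<lambda>_. borel) ?Y {..<n}"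
    by (rule indep_vars_compose2[OF indep]) measurable
  then have "(\<integral>\<^sup>+w. (\<Prod>i<n. ?Y i w) \<partial>M) = (\<Prod>i<n. \<integral>\<^sup>+w. ?Y i w \<partial>M)"
    by (intro indep_vars_nn_integral) auto
  also have "\<dots> = ennreal (((1 - 2 * l) powr (- real CARD('p) / 2)) ^ n)"
    using nn_integral_mvn_exp_quadratic_form[OF prob_space_axioms gaussian l]
    by (simp add: ennreal_power)
  also have "((1 - 2 * l) powr (- real CARD('p) / 2)) ^ n
      = (1 - 2 * l) powr (- (real n * real CARD('p)) / 2)"
    using l by (subst powr_power) auto
  finally show "(\<integral>\<^sup>+w. ennreal (exp (l * Q w)) \<partial>M)
      = ennreal ((1 - 2 * l) powr (- (real n * real CARD('p)) / 2))"
    by (simp add: Q_def sum_distrib_left exp_sum prod_ennreal)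
qed

lemma phistar_pos: "0 < phistar (matrix_inv Sig) $ j"
  using sym_posdef_diag_pos[OF sym_posdef_matrix_inv[OF Sig], of j] by (simp add: phistar_def)

context
  fixes k :: 'p
  assumes column_nonzero: "\<And>j. matrix_inv Sig $ j $ k \<noteq> 0"
begin

lemma phi_sml_sample:
  "phi_sml k (sample_cov n (\<lambda>i. X i w)) (Bmat (matrix_inv Sig)) $ j
     = Q w / (real n * real CARD('p)) * phistar (matrix_inv Sig) $ j"
  unfolding phi_sml_Bmat[OF sym_posdef_matrix_inv[OF Sig] column_nonzero] trace_sample_cov
    Q_def[symmetric] phistar_def
  by simp

lemma AE_phi_sml_unique_argmax:
  "AE w in M. phi_sml k (sample_cov n (\<lambda>i. X i w)) (Bmat (matrix_inv Sig)) \<in> feasible (Bmat (matrix_inv Sig))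
     \<and> (\<forall>psi \<in> feasible (Bmat (matrix_inv Sig)).
          psi \<noteq> phi_sml k (sample_cov n (\<lambda>i. X i w)) (Bmat (matrix_inv Sig)) \<longrightarrow>
          loglik (sample_cov n (\<lambda>i. X i w)) (Bmat (matrix_inv Sig)) psi
            < loglik (sample_cov n (\<lambda>i. X i w)) (Bmat (matrix_inv Sig))
                (phi_sml k (sample_cov n (\<lambda>i. X i w)) (Bmat (matrix_inv Sig))))"
  using AE_Z_pos
proof eventually_elim
  case (elim w)
  then have "0 < trace (sample_cov n (\<lambda>i. X i w) ** matrix_inv Sig)"
    using n_pos by (simp add: trace_sample_cov Q_def)
  then show ?case
    using phi_sml_unique_argmax[OF sym_posdef_matrix_inv[OF Sig] column_nonzero] by blast
qed

lemma relative_error_phi_sml: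
  "(phi_sml k (sample_cov n (\<lambda>i. X i w)) (Bmat (matrix_inv Sig)) $ j - phistar (matrix_inv Sig) $ j)
     / phistar (matrix_inv Sig) $ j = Q w / (real n * real CARD('p)) - 1"
proof -
  note phistar_pos[of j]
  moreover have "phi_sml k (sample_cov n (\<lambda>i. X i w)) (Bmat (matrix_inv Sig)) $ j - phistar (matrix_inv Sig) $ j
      = (Q w / (real n * real CARD('p)) - 1) * phistar (matrix_inv Sig) $ j"
    by (simp add: phi_sml_sample algebra_simps)
  ultimately show ?thesis by simp
qed

lemma expectation_phi_sml_error:
  "expectation (\<lambda>w. (phi_sml k (sample_cov n (\<lambda>i. X i w)) (Bmat (matrix_inv Sig)) $ j
       - phistar (matrix_inv Sig) $ j)\<^sup>2)
     = 2 * (phistar (matrix_inv Sig) $ j)\<^sup>2 / (real n * real CARD('p))"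
proof -
  have "(\<lambda>w. (phi_sml k (sample_cov n (\<lambda>i. X i w)) (Bmat (matrix_inv Sig)) $ j
       - phistar (matrix_inv Sig) $ j)\<^sup>2)
      = (\<lambda>w. (phistar (matrix_inv Sig) $ j)\<^sup>2 * (Q w / (real n * real CARD('p)) - 1)\<^sup>2)"
    by (simp add: fun_eq_iff phi_sml_sample power2_eq_square algebra_simps)
  then show ?thesis using expectation_relative_error_squared by simp
qed

lemma prob_max_relative_error_phi_sml:
  assumes p: "2 \<le> CARD('p)" and t: "0 < t"
  shows "prob {w \<in> space M.
           (MAX j\<in>UNIV. \<bar>phi_sml k (sample_cov n (\<lambda>i. X i w)) (Bmat (matrix_inv Sig)) $ j
                           - phistar (matrix_inv Sig) $ j\<bar> / phistar (matrix_inv Sig) $ j)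
           > 2 * sqrt ((t + ln (real CARD('p))) / (real n * real CARD('p)))
             + 2 * (t + ln (real CARD('p))) / (real n * real CARD('p))}
         \<le> 2 * exp (- t)"
proof -
  have relative: "\<bar>phi_sml k (sample_cov n (\<lambda>i. X i w)) (Bmat (matrix_inv Sig)) $ j
        - phistar (matrix_inv Sig) $ j\<bar> / phistar (matrix_inv Sig) $ j
      = \<bar>Q w / (real n * real CARD('p)) - 1\<bar>" for w j
    using arg_cong[OF relative_error_phi_sml[of w j], of abs] phistar_pos[of j] by simp
  have ln_p: "0 < ln (real CARD('p))" using p by simp
  then have "prob {w \<in> space M. 2 * sqrt ((t + ln (real CARD('p))) / (real n * real CARD('p)))
          + 2 * (t + ln (real CARD('p))) / (real n * real CARD('p))
          < \<bar>Q w / (real n * real CARD('p)) - 1\<bar>}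
        \<le> 2 * exp (- (t + ln (real CARD('p))))"
    using t by (intro relative_deviation add_pos_pos)
  also have "\<dots> \<le> 2 * exp (- t)" using ln_p by simp
  finally show ?thesis by (simp add: relative)
qed

end

end

theorem proposition3:
  fixes M :: "'a measure" and n :: nat and Sig :: "real^'p^'p" and k :: "'p"
    and X :: "nat \<Rightarrow> 'a \<Rightarrow> real^'p"
  assumes "prob_space M"
    and "n \<ge> 1" and "CARD('p) \<ge> 2"
    and "sym_posdef Sig"
    and "prob_space.indep_vars M (\<lambda>_. borel) X {..<n}"
    and "\<And>i. i < n \<Longrightarrow> distributed M lborel (X i) (\<lambda>x. ennreal (mvn_density Sig x))"
    and "\<And>j. matrix_inv Sig $ j $ k \<noteq> 0"
  shows "feasible (Bmat (matrix_inv Sig)) =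
           {phi. 0 < phi $ k \<and> (\<forall>j. phi $ j =
              (Bmat (matrix_inv Sig) $ k $ j / Bmat (matrix_inv Sig) $ j $ k) * phi $ k)}
       \<and> (AE w in M.
            phi_sml k (sample_cov n (\<lambda>i. X i w)) (Bmat (matrix_inv Sig))
              \<in> feasible (Bmat (matrix_inv Sig))
          \<and> (\<forall>psi \<in> feasible (Bmat (matrix_inv Sig)).
               psi \<noteq> phi_sml k (sample_cov n (\<lambda>i. X i w)) (Bmat (matrix_inv Sig)) \<longrightarrow>
               loglik (sample_cov n (\<lambda>i. X i w)) (Bmat (matrix_inv Sig)) psi
                 < loglik (sample_cov n (\<lambda>i. X i w)) (Bmat (matrix_inv Sig))
                     (phi_sml k (sample_cov n (\<lambda>i. X i w)) (Bmat (matrix_inv Sig)))))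
       \<and> (\<forall>j. prob_space.expectation M
               (\<lambda>w. (phi_sml k (sample_cov n (\<lambda>i. X i w)) (Bmat (matrix_inv Sig)) $ j
                      - phistar (matrix_inv Sig) $ j) ^ 2)
             = 2 * (phistar (matrix_inv Sig) $ j) ^ 2 / (real n * real CARD('p)))
       \<and> (\<forall>t > 0. prob_space.prob M
             {w \<in> space M.
               (MAX j\<in>UNIV. \<bar>phi_sml k (sample_cov n (\<lambda>i. X i w)) (Bmat (matrix_inv Sig)) $ j
                               - phistar (matrix_inv Sig) $ j\<bar> / phistar (matrix_inv Sig) $ j)
               > 2 * sqrt ((t + ln (real CARD('p))) / (real n * real CARD('p)))
                 + 2 * (t + ln (real CARD('p))) / (real n * real CARD('p))}
           \<le> 2 * exp (- t))"
proof -
  interpret gaussian_sample M n Sig X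
    using assms(1,2,4-6) by (simp add: gaussian_sample_def gaussian_sample_axioms_def)
  show ?thesis
  proof (intro conjI allI impI)
    show "feasible (Bmat (matrix_inv Sig)) = {phi. 0 < phi $ k \<and> (\<forall>j. phi $ j =
        (Bmat (matrix_inv Sig) $ k $ j / Bmat (matrix_inv Sig) $ j $ k) * phi $ k)}"
      by (rule feasible_Bmat_eq[OF sym_posdef_matrix_inv[OF Sig] assms(7)])
  qed (use AE_phi_sml_unique_argmax[OF assms(7)] expectation_phi_sml_error[OF assms(7)]
         prob_max_relative_error_phi_sml[OF assms(7) assms(3)] in auto)
qed

end
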